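(* Let $p\geq 5$ be an odd integer. For any real number $x\geq 2$, \[ \left(\left(1-\frac{1}{4x}\right)^2+\frac{1}{8x^2}\right)^{-\frac1p-1}\left(1-\frac{1}{4x}\right)+\left(\left(1+\frac{1}{4x}\right)^2+\frac{1}{8x^2}\right)^{-\frac1p-1}\left(1+\frac{1}{4x}\right)<2. \] *)

theory Defs
  imports Complex_Main
begin

end

theory Submission
  imports Defs "HOL-Analysis.Analysis"
begin

text \<open>With \<open>t = 1/(4x)\<close> and \<open>r = 1/p\<close> the two bases are \<open>A = 1 - 2t + 3t\<^sup>2\<close> and
  \<open>B = 1 + 2t + 3t\<^sup>2\<close>. Bounding \<open>A powr -r = (1/A) powr r\<close> by the tangent line of the concave map
  \<open>u \<mapsto> u\<^sup>r\<close> at \<open>u = 1\<close> (evaluated at \<open>u = 1/A\<close>), and likewise for \<open>B\<close>, reduces the claim to a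
  rational inequality in \<open>t\<close> and \<open>r\<close>; after clearing denominators the gap is
  \<open>t\<^sup>2 ((2 - 6r) + (22 + 28r) t\<^sup>2 + (54 + 18r) t\<^sup>4 + 162 t\<^sup>6)\<close>, which is positive for
  \<open>r \<le> 1/3\<close>.\<close>

lemma powr_le_tangent_line:
  fixes u r :: real
  assumes "u > 0" "0 \<le> r" "r \<le> 1"
  shows "u powr r \<le> r * u + (1 - r)"
  using Youngs_inequality_0[of r "1 - r" u 1] assms by simp

lemma powr_minus_diff_one:
  fixes a r :: real
  assumes "a > 0"
  shows "a powr (-r - 1) = (1/a) powr r * (1/a)"
proof -
  have "a powr (-r - 1) = a powr (-r) * a powr (-1)"
    using powr_add[of a "-r" "-1"] by simp
  also have "\<dots> = (1/a) powr r * (1/a)"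
    using assms by (simp add: powr_minus powr_divide field_simps)
  finally show ?thesis .
qed

lemma quadratic_base_pos:
  fixes u :: real
  shows "0 < 1 + 2*u + 3*u^2"
proof -
  have "1 + 2*u + 3*u^2 = (1 + u)^2 + 2*u^2" by (simp add: power2_eq_square algebra_simps)
  moreover have "(1 + u)^2 + 2*u^2 > 0"
    by (cases "u = 0") (simp_all add: add_nonneg_pos)
  ultimately show ?thesis by simp
qed

lemma cleared_denominators_gap:
  fixes t r :: real
  defines "A \<equiv> 1 - 2*t + 3*t^2" and "B \<equiv> 1 + 2*t + 3*t^2"
  shows "2 * A^2 * B^2 - ((1 - t) * (r + (1 - r) * A) * B^2 + (1 + t) * (r + (1 - r) * B) * A^2)
       = t^2 * ((2 - 6*r) + (22 + 28*r) * t^2 + (54 + 18*r) * t^4 + 162 * t^6)"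
  unfolding A_def B_def by (simp add: algebra_simps power2_eq_square power_numeral_reduce)

lemma tangent_bound_sum_lt_two:
  fixes t r :: real
  defines "A \<equiv> 1 - 2*t + 3*t^2" and "B \<equiv> 1 + 2*t + 3*t^2"
  assumes "0 < t" "0 \<le> r" "r \<le> 1/3"
  shows "(r * (1/A) + (1 - r)) * (1/A) * (1 - t) + (r * (1/B) + (1 - r)) * (1/B) * (1 + t) < 2"
proof -
  have A_pos: "A > 0" and B_pos: "B > 0"
    using quadratic_base_pos[of "-t"] quadratic_base_pos[of t] by (simp_all add: A_def B_def)
  have "(2 - 6*r) + (22 + 28*r) * t^2 + (54 + 18*r) * t^4 + 162 * t^6 > 0"
    using \<open>0 < t\<close> \<open>0 \<le> r\<close> \<open>r \<le> 1/3\<close> by (intro add_nonneg_pos) simp_all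
  then have "t^2 * ((2 - 6*r) + (22 + 28*r) * t^2 + (54 + 18*r) * t^4 + 162 * t^6) > 0"
    using \<open>0 < t\<close> by simp
  then have "(1 - t) * (r + (1 - r) * A) * B^2 + (1 + t) * (r + (1 - r) * B) * A^2 < 2 * A^2 * B^2"
    using cleared_denominators_gap[of t r] unfolding A_def B_def by linarith
  moreover have "(r * (1/A) + (1 - r)) * (1/A) * (1 - t) + (r * (1/B) + (1 - r)) * (1/B) * (1 + t)
     = ((1 - t) * (r + (1 - r) * A) * B^2 + (1 + t) * (r + (1 - r) * B) * A^2) / (A^2 * B^2)"
    using A_pos B_pos by (simp add: field_simps power2_eq_square)
  ultimately show ?thesis
    using A_pos B_pos by (simp add: divide_less_eq mult.assoc)
qed

lemma powr_sum_lt_two: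
  fixes t r :: real
  defines "A \<equiv> 1 - 2*t + 3*t^2" and "B \<equiv> 1 + 2*t + 3*t^2"
  assumes "0 < t" "t \<le> 1" "0 \<le> r" "r \<le> 1/3"
  shows "A powr (-r - 1) * (1 - t) + B powr (-r - 1) * (1 + t) < 2"
proof -
  have A_pos: "A > 0" and B_pos: "B > 0"
    using quadratic_base_pos[of "-t"] quadratic_base_pos[of t] by (simp_all add: A_def B_def)
  have r_unit: "0 \<le> r" "r \<le> 1" using \<open>0 \<le> r\<close> \<open>r \<le> 1/3\<close> by simp_all
  have "A powr (-r - 1) * (1 - t) \<le> (r * (1/A) + (1 - r)) * (1/A) * (1 - t)"
    unfolding powr_minus_diff_one[OF A_pos]
    using powr_le_tangent_line[of "1/A" r] A_pos r_unit \<open>t \<le> 1\<close> by (intro mult_right_mono) auto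
  moreover have "B powr (-r - 1) * (1 + t) \<le> (r * (1/B) + (1 - r)) * (1/B) * (1 + t)"
    unfolding powr_minus_diff_one[OF B_pos]
    using powr_le_tangent_line[of "1/B" r] B_pos r_unit \<open>0 < t\<close> by (intro mult_right_mono) auto
  ultimately show ?thesis
    using tangent_bound_sum_lt_two[of t r] \<open>0 < t\<close> \<open>0 \<le> r\<close> \<open>r \<le> 1/3\<close>
    unfolding A_def B_def by linarith
qed

theorem lemma4p1:
  fixes p :: int and x :: real
  assumes "odd p" and "p \<ge> 5" and "x \<ge> 2"
  shows "((1 - 1/(4*x))^2 + 1/(8*x^2)) powr (-1/real_of_int p - 1) * (1 - 1/(4*x))
       + ((1 + 1/(4*x))^2 + 1/(8*x^2)) powr (-1/real_of_int p - 1) * (1 + 1/(4*x)) < 2"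
proof -
  define t where "t = 1/(4*x)"
  define r where "r = 1/real_of_int p"
  have "0 < t" "t \<le> 1" using \<open>x \<ge> 2\<close> by (auto simp: t_def field_simps)
  moreover have "0 \<le> r" "r \<le> 1/3" using \<open>p \<ge> 5\<close> by (auto simp: r_def field_simps)
  moreover have "(1 - 1/(4*x))^2 + 1/(8*x^2) = 1 - 2*t + 3*t^2"
    and "(1 + 1/(4*x))^2 + 1/(8*x^2) = 1 + 2*t + 3*t^2"
    using \<open>x \<ge> 2\<close> by (simp_all add: t_def field_simps power2_eq_square)
  moreover have "-1/real_of_int p - 1 = -r - 1" by (simp add: r_def)
  ultimately show ?thesis using powr_sum_lt_two[of t r] by (simp add: t_def)
qed

end
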